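(* Let $n\ge 1$, $1\le k\le n$, and let $\omega_k$ be the $k$-th fundamental weight of $\mathfrak{sp}_{2n}(\mathbb C)$. Then the symplectic FFLV basis $\{f^{\mathsf p}\nu_{\omega_k} : \mathsf p\in S(\omega_k)\}$ of $V_{\omega_k}$ is in a weight preserving one-to-one correspondence with the set of single column symplectic PBW tableaux of length $k$.
   Context: Notation for $\mathfrak{sp}_{2n}$: $\varepsilon_1,\dots,\varepsilon_n$ is the standard basis of $\mathfrak h^*$, simple roots $\alpha_i=\varepsilon_i-\varepsilon_{i+1}$ ($i<n$), $\alpha_n=2\varepsilon_n$, fundamental weights $\omega_k=\varepsilon_1+\dots+\varepsilon_k$. For $1\le j\le n$ put $\bar j:=2n+1-j$. Let $\mathsf J=\{1<2<\dots<n<\overline{n-1}<\dots<\bar 1\}$; for $x\in\mathsf J$, $x+1$ denotes the successor of $x$ in $\mathsf J$. The positive roots are $\alpha_{i,j}=\alpha_i+\dots+\alpha_j=\varepsilon_i-\varepsilon_{j+1}$ for $1\le i\le j<n$, $\alpha_{i,n}=\alpha_i+\dots+\alpha_n=\varepsilon_i+\varepsilon_n$, and $\alpha_{i,\bar j}=\alpha_i+\dots+\alpha_n+\alpha_{n-1}+\dots+\alpha_j=\varepsilon_i+\varepsilon_j$ for $1\le i\le j\le n$ (with $\alpha_{i,\bar n}=\alpha_{i,n}$); write $\alpha_{\bar j}=\alpha_{j,\bar j}$. For each positive root $\alpha$ fix a nonzero root vector $f_\alpha\in\mathfrak n^-_{-\alpha}$, and write $f_{p,q}=f_{\alpha_{p,q}}$.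 A symplectic Dyck path is a sequence $\mathsf d=(\mathsf d(0),\dots,\mathsf d(s))$, $s\ge 0$, of positive roots such that $\mathsf d(0)=\alpha_i$ is simple, $\mathsf d(s)=\alpha_j$ or $\mathsf d(s)=\alpha_{\bar j}$ for some $j$, and if $\mathsf d(r)=\alpha_{p,q}$ ($p,q\in\mathsf J$) then $\mathsf d(r+1)\in\{\alpha_{p,q+1},\alpha_{p+1,q}\}$. For a dominant integral weight $\lambda=\sum_k m_k\omega_k$, the FFLV polytope $P(\lambda)\subset\mathbb R_{\ge0}^{n^2}$ consists of the points $(\mathsf p_\alpha)_{\alpha>0}$ with $\mathsf p_\alpha\ge 0$ such that for every Dyck path $\mathsf d$ with $\mathsf d(0)=\alpha_i$: $\sum_r \mathsf p_{\mathsf d(r)}\le m_i+\dots+m_j$ if $\mathsf d(s)=\alpha_j$, and $\sum_r \mathsf p_{\mathsf d(r)}\le m_i+\dots+m_n$ if $\mathsf d(s)=\alpha_{\bar j}$. $S(\lambda)$ is the set of integral points of $P(\lambda)$, and $f^{\mathsf p}=\prod_\alpha f_\alpha^{\mathsf p_\alpha}$ (product in a fixed order of root vectors). It is known (Feigin–Fourier–Littelmann) that $\{f^{\mathsf p}\nu_\lambda:\mathsf p\in S(\lambda)\}$ is a basis of the irreducible module $V_\lambda$ with highest weight vector $\nu_\lambda$ (the symplectic FFLV basis); the weight of $f^{\mathsf p}\nu_\lambda$ is $\lambda-\sum_\alpha \mathsf p_\alpha\alpha$. Let $\mathcal N=\{1<\dots<n<\bar n<\dots<\bar 1\}$. A single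 column symplectic PBW tableau of length $k$ is a column of $k$ boxes filled with entries $T_1,\dots,T_k\in\mathcal N$ (top to bottom) such that: (i) if $T_i\le k$ then $T_i=i$; (ii) if $i_1<i_2$ and $T_{i_1}\ne i_1$ then $T_{i_1}>T_{i_2}$; (iii) if $T_i=i$ and $T_{i'}=\bar i$ for some $i'$, then $i'<i$, whenever $i<k$. Its weight is $\sum_{i\in\{1,\dots,n\},\, i\text{ appears}}\varepsilon_i-\sum_{j\in\{1,\dots,n\},\,\bar j\text{ appears}}\varepsilon_j$. *)

theory Defs
  imports Complex_Main
begin

text \<open>Elements of the ordered alphabet
  J = {1 < ... < n < bar(n-1) < ... < bar 1} and N = {1 < ... < n < bar n < ... < bar 1}
  are encoded as natural numbers, with bar j := 2n+1-j; the orders are the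
  orders of nat.  Weights are functions nat => int supported on {1..n}
  (coordinates w.r.t. eps_1, ..., eps_n).\<close>

definition sbar :: "nat \<Rightarrow> nat \<Rightarrow> nat" where
  "sbar n j = 2 * n + 1 - j"

definition Jset :: "nat \<Rightarrow> nat set" where
  "Jset n = {1..n} \<union> {sbar n j | j. 1 \<le> j \<and> j < n}"

definition succJ :: "nat \<Rightarrow> nat \<Rightarrow> nat" where
  "succJ n x = (if x = n then sbar n (n - 1) else x + 1)"

text \<open>Positive roots alpha_{p,q}, p in {1..n}, q in J: p \<le> q \<le> n, or q = bar j with p \<le> j < n
  (alpha_{p, bar n} is identified with alpha_{p,n}).\<close>
definition posroots :: "nat \<Rightarrow> (nat \<times> nat) set" where
  "posroots n = {(p, q). 1 \<le> p \<and> p \<le> q \<and> q \<le> n}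
              \<union> {(p, sbar n j) | p j. 1 \<le> p \<and> p \<le> j \<and> j < n}"

definition eps :: "nat \<Rightarrow> nat \<Rightarrow> int" where
  "eps i = (\<lambda>l. if l = i then 1 else 0)"

definition rootvec :: "nat \<Rightarrow> nat \<times> nat \<Rightarrow> nat \<Rightarrow> int" where
  "rootvec n a = (case a of (p, q) \<Rightarrow>
     if q < n then (\<lambda>l. eps p l - eps (q + 1) l)
     else if q = n then (\<lambda>l. eps p l + eps n l)
     else (\<lambda>l. eps p l + eps (sbar n q) l))"

text \<open>Symplectic Dyck paths, as nonempty lists d = [d(0), ..., d(s)] of positive roots.\<close>
definition dyck_path :: "nat \<Rightarrow> (nat \<times> nat) list \<Rightarrow> bool" where
  "dyck_path n d \<longleftrightarrow> d \<noteq> [] \<and> set d \<subseteq> posroots n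
     \<and> fst (hd d) = snd (hd d)
     \<and> (snd (last d) = fst (last d) \<or> snd (last d) = sbar n (fst (last d)))
     \<and> (\<forall>r. Suc r < length d \<longrightarrow>
          (case d ! r of (p, q) \<Rightarrow> d ! Suc r = (p, succJ n q) \<or> d ! Suc r = (succJ n p, q)))"

text \<open>Right-hand side of the Dyck path inequality for lambda = sum_k m_k omega_k:
  m_i + ... + m_j if d(s) = alpha_j, and m_i + ... + m_n if d(s) = alpha_{bar j}.\<close>
definition dyck_bound :: "nat \<Rightarrow> (nat \<Rightarrow> nat) \<Rightarrow> (nat \<times> nat) list \<Rightarrow> nat" where
  "dyck_bound n m d =
     (let i = fst (hd d); j = fst (last d) in
       if snd (last d) = j then (\<Sum>t = i..j. m t) else (\<Sum>t = i..n. m t))"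

text \<open>The FFLV polytope P(lambda) in R_{\<ge>0}^{n^2}: points are real functions on the
  positive roots (extended by zero outside).\<close>
definition fflv_polytope :: "nat \<Rightarrow> (nat \<Rightarrow> nat) \<Rightarrow> (nat \<times> nat \<Rightarrow> real) set" where
  "fflv_polytope n m = {x. (\<forall>a. a \<notin> posroots n \<longrightarrow> x a = 0)
      \<and> (\<forall>a \<in> posroots n. x a \<ge> 0)
      \<and> (\<forall>d. dyck_path n d \<longrightarrow> sum_list (map x d) \<le> real (dyck_bound n m d))}"

definition fflv_S :: "nat \<Rightarrow> (nat \<Rightarrow> nat) \<Rightarrow> (nat \<times> nat \<Rightarrow> int) set" where
  "fflv_S n m = {p. (\<lambda>a. real_of_int (p a)) \<in> fflv_polytope n m}"

text \<open>lambda = sum_k m_k omega_k in eps-coordinates.\<close>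
definition hw :: "nat \<Rightarrow> (nat \<Rightarrow> nat) \<Rightarrow> nat \<Rightarrow> int" where
  "hw n m l = (if 1 \<le> l \<and> l \<le> n then (\<Sum>t = l..n. int (m t)) else 0)"

definition fflv_weight :: "nat \<Rightarrow> (nat \<Rightarrow> nat) \<Rightarrow> (nat \<times> nat \<Rightarrow> int) \<Rightarrow> nat \<Rightarrow> int" where
  "fflv_weight n m p = (\<lambda>l. hw n m l - (\<Sum>a \<in> posroots n. p a * rootvec n a l))"

text \<open>The k-th fundamental weight omega_k, as coefficient vector m.\<close>
definition omega :: "nat \<Rightarrow> nat \<Rightarrow> nat" where
  "omega k = (\<lambda>t. if t = k then 1 else 0)"

text \<open>Single column symplectic PBW tableaux of length k: lists T with T ! (i-1) = T_i.\<close>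
definition pbw_column :: "nat \<Rightarrow> nat \<Rightarrow> nat list \<Rightarrow> bool" where
  "pbw_column n k T \<longleftrightarrow> length T = k
     \<and> (\<forall>i \<in> {1..k}. T ! (i - 1) \<in> {1..2 * n})
     \<and> (\<forall>i \<in> {1..k}. T ! (i - 1) \<le> k \<longrightarrow> T ! (i - 1) = i)
     \<and> (\<forall>i1 \<in> {1..k}. \<forall>i2 \<in> {1..k}. i1 < i2 \<and> T ! (i1 - 1) \<noteq> i1 \<longrightarrow> T ! (i1 - 1) > T ! (i2 - 1))
     \<and> (\<forall>i \<in> {1..k}. \<forall>i' \<in> {1..k}. i < k \<and> T ! (i - 1) = i \<and> T ! (i' - 1) = sbar n i \<longrightarrow> i' < i)"

definition pbw_columns :: "nat \<Rightarrow> nat \<Rightarrow> nat list set" where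
  "pbw_columns n k = {T. pbw_column n k T}"

definition tableau_weight :: "nat \<Rightarrow> nat list \<Rightarrow> nat \<Rightarrow> int" where
  "tableau_weight n T = (\<lambda>l. if 1 \<le> l \<and> l \<le> n then
       (if l \<in> set T then 1 else 0) - (if sbar n l \<in> set T then 1 else 0) else 0)"

end

(*
  For lambda = omega_k every Dyck path bound is 0 or 1.  The roots on a Dyck path form a chain
  for the componentwise order of (p, q); conversely any two comparable roots lie on a common
  Dyck path of bound 1, and a root alpha_{p,q} lies on a Dyck path of bound 0 unless p \<le> k \<le> q.
  Hence S(omega_k) consists exactly of the indicator functions of the antichains among the
  roots alpha_{p,q} with p \<le> k \<le> q.

  Write alpha_{p,q} = eps_p - eps_x with a letter x > k of N.  An antichain then chooses in
  some rows p of the column 1, ..., k a letter x, strictly decreasing down the rows;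
  substituting these letters gives a PBW tableau of the same weight, and every PBW tableau
  arises in exactly one way.
*)
theory Submission
  imports Defs "HOL-Library.Product_Order"
begin

lemma sorted_wrt_less_distinct: "sorted_wrt (<) xs \<Longrightarrow> distinct (xs :: 'a :: order list)"
  by (induction xs) auto

lemma sorted_wrt_less_comparable:
  "sorted_wrt (<) xs \<Longrightarrow> x \<in> set xs \<Longrightarrow> y \<in> set xs \<Longrightarrow> x \<le> y \<or> y \<le> (x :: 'a :: order)"
  by (induction xs) (auto simp: less_imp_le)

lemma sorted_wrt_less_hd_last:
  "sorted_wrt (<) xs \<Longrightarrow> x \<in> set xs \<Longrightarrow> hd xs \<le> x \<and> x \<le> (last xs :: 'a :: order)"
  by (induction xs) (auto simp: less_imp_le)

text \<open>alpha_{p,q} = eps_p - eps_x for the letter x = root_entry n q of N, with eps_{bar j} = - eps_j.\<close>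

definition root_entry :: "nat \<Rightarrow> nat \<Rightarrow> nat" where
  "root_entry n q = (if q \<le> n then q + 1 else q)"

text \<open>The image of the positive roots under (p, q) \<mapsto> (p, root_entry n q); there a Dyck path
  becomes a lattice path with unit steps.\<close>

definition grid :: "nat \<Rightarrow> (nat \<times> nat) set" where
  "grid n = {(p, r). 1 \<le> p \<and> p < r \<and> p + r \<le> 2 * n + 1}"

definition grid_to_root :: "nat \<Rightarrow> nat \<times> nat \<Rightarrow> nat \<times> nat" where
  "grid_to_root n x = (fst x, if snd x \<le> n + 1 then snd x - 1 else snd x)"

definition grid_step :: "nat \<times> nat \<Rightarrow> nat \<times> nat \<Rightarrow> bool" where
  "grid_step x y \<longleftrightarrow> y = (fst x, snd x + 1) \<or> y = (fst x + 1, snd x)"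

definition grid_path :: "nat \<Rightarrow> (nat \<times> nat) list \<Rightarrow> bool" where
  "grid_path n e \<longleftrightarrow> e \<noteq> [] \<and> set e \<subseteq> grid n \<and> successively grid_step e"

lemma posroots_iff:
  "(p, q) \<in> posroots n \<longleftrightarrow> 1 \<le> p \<and> p \<le> q \<and> q \<noteq> n + 1 \<and> p + root_entry n q \<le> 2 * n + 1"
proof
  assume "1 \<le> p \<and> p \<le> q \<and> q \<noteq> n + 1 \<and> p + root_entry n q \<le> 2 * n + 1"
  then show "(p, q) \<in> posroots n"
    unfolding posroots_def root_entry_def sbar_def
    by (cases "q \<le> n") (auto intro!: exI[of _ "2 * n + 1 - q"])
qed (auto simp: posroots_def root_entry_def sbar_def)

lemma finite_posroots: "finite (posroots n)"
proof (rule finite_subset)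
  show "posroots n \<subseteq> {..2 * n} \<times> {..2 * n}"
    by (auto simp: posroots_iff root_entry_def split: if_splits)
qed simp

lemma root_entry_le_iff:
  "q \<noteq> n + 1 \<Longrightarrow> q' \<noteq> n + 1 \<Longrightarrow> root_entry n q \<le> root_entry n q' \<longleftrightarrow> q \<le> q'"
  unfolding root_entry_def by (split if_split)+ linarith

lemma root_entry_eq_iff:
  "q \<noteq> n + 1 \<Longrightarrow> q' \<noteq> n + 1 \<Longrightarrow> root_entry n q = root_entry n q' \<longleftrightarrow> q = q'"
  unfolding root_entry_def by (split if_split)+ linarith

lemma root_entry_gt: "k \<le> n \<Longrightarrow> k \<le> q \<Longrightarrow> k < root_entry n q"
  by (simp add: root_entry_def)

lemma grid_to_root_in_posroots: "x \<in> grid n \<Longrightarrow> grid_to_root n x \<in> posroots n"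
  by (auto simp: grid_def grid_to_root_def posroots_iff root_entry_def)

lemma root_entry_grid_to_root: "x \<in> grid n \<Longrightarrow> root_entry n (snd (grid_to_root n x)) = snd x"
  by (auto simp: grid_def grid_to_root_def root_entry_def)

lemma grid_to_root_root_entry: "(p, q) \<in> posroots n \<Longrightarrow> grid_to_root n (p, root_entry n q) = (p, q)"
  by (auto simp: posroots_iff grid_to_root_def root_entry_def)

lemma root_entry_mono: "q \<le> q' \<Longrightarrow> root_entry n q \<le> root_entry n q'"
  by (simp add: root_entry_def)

lemma grid_path_exists:
  assumes "u \<in> grid n" "w \<in> grid n" "u \<le> w"
  shows "\<exists>e. grid_path n e \<and> hd e = u \<and> last e = w"
  using assms
proof (induction "fst w + snd w - (fst u + snd u)" arbitrary: u rule: less_induct)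
  case less
  show ?case
  proof (cases "u = w")
    case True
    then show ?thesis using less.prems by (auto simp: grid_path_def intro!: exI[of _ "[u]"])
  next
    case False
    \<comment> \<open>Move right while possible, then down; the region is a staircase, so both moves stay in it.\<close>
    define v where "v = (if snd u < snd w then (fst u, snd u + 1) else (fst u + 1, snd u))"
    have "grid_step u v" by (auto simp: v_def grid_step_def)
    moreover have "v \<in> grid n" "v \<le> w"
      using less.prems False by (cases u; cases w; auto simp: v_def grid_def)+
    moreover have "fst w + snd w - (fst v + snd v) < fst w + snd w - (fst u + snd u)"
      using less.prems False by (cases u; cases w; auto simp: v_def)
    ultimately obtain e where "grid_path n e" "hd e = v" "last e = w"
      using less.hyps less.prems(2) by blast
    then show ?thesis
      using \<open>grid_step u v\<close> less.prems(1)
      by (intro exI[of _ "u # e"]) (auto simp: grid_path_def successively_Cons)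
  qed
qed

lemma grid_path_append:
  assumes e1: "grid_path n e1" and e2: "grid_path n (last e1 # t)"
  shows "grid_path n (e1 @ t)" "hd (e1 @ t) = hd e1" "last (e1 @ t) = last (last e1 # t)"
    "set (e1 @ t) = set e1 \<union> set (last e1 # t)"
proof -
  have "e1 \<noteq> []" using e1 by (simp add: grid_path_def)
  then show "grid_path n (e1 @ t)"
    using e1 e2 by (auto simp: grid_path_def successively_append_iff successively_Cons)
  show "hd (e1 @ t) = hd e1" using \<open>e1 \<noteq> []\<close> by simp
  show "last (e1 @ t) = last (last e1 # t)" using \<open>e1 \<noteq> []\<close> by simp
  show "set (e1 @ t) = set e1 \<union> set (last e1 # t)" using \<open>e1 \<noteq> []\<close> by auto
qed

lemma grid_path_through:
  assumes "cs \<noteq> []" "set cs \<subseteq> grid n" "sorted_wrt (\<le>) cs"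
  shows "\<exists>e. grid_path n e \<and> hd e = hd cs \<and> last e = last cs \<and> set cs \<subseteq> set e"
  using assms
proof (induction cs rule: induct_list012)
  case (2 x)
  then show ?case by (auto simp: grid_path_def intro!: exI[of _ "[x]"])
next
  case (3 x y cs)
  obtain e where e: "grid_path n e" "hd e = y" "last e = last (y # cs)" "set (y # cs) \<subseteq> set e"
    using "3.IH"(2) "3.prems" by auto
  obtain e0 where e0: "grid_path n e0" "hd e0 = x" "last e0 = y"
    using grid_path_exists[of x n y] "3.prems" by auto
  obtain t where t: "e = last e0 # t"
    using e(1,2) e0(3) by (cases e) (auto simp: grid_path_def)
  note concat = grid_path_append[OF e0(1), of t, folded t, OF e(1)]
  have "x \<in> set e0" using e0 by (auto simp: grid_path_def)
  then show ?case
    using concat e e0 t by (intro exI[of _ "e0 @ t"]) auto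
qed simp

definition dyck_step :: "nat \<Rightarrow> nat \<times> nat \<Rightarrow> nat \<times> nat \<Rightarrow> bool" where
  "dyck_step n a b \<longleftrightarrow> b = (fst a, succJ n (snd a)) \<or> b = (succJ n (fst a), snd a)"

lemma dyck_path_iff:
  "dyck_path n d \<longleftrightarrow> d \<noteq> [] \<and> set d \<subseteq> posroots n \<and> fst (hd d) = snd (hd d)
     \<and> (snd (last d) = fst (last d) \<or> snd (last d) = sbar n (fst (last d)))
     \<and> successively (dyck_step n) d"
proof -
  have "(case d ! r of (p, q) \<Rightarrow> d ! Suc r = (p, succJ n q) \<or> d ! Suc r = (succJ n p, q))
      \<longleftrightarrow> dyck_step n (d ! r) (d ! Suc r)" for r
    by (cases "d ! r") (simp add: dyck_step_def)
  then show ?thesis unfolding dyck_path_def successively_conv_nth by simp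
qed

lemma succJ_gt: "x < succJ n x"
  by (auto simp: succJ_def sbar_def)

lemma dyck_step_less: "dyck_step n a b \<Longrightarrow> a < b"
  using succJ_gt[of "fst a" n] succJ_gt[of "snd a" n]
  by (cases a) (auto simp: dyck_step_def less_le)

lemma grid_step_dyck_step:
  assumes "x \<in> grid n" "y \<in> grid n" "grid_step x y"
  shows "dyck_step n (grid_to_root n x) (grid_to_root n y)"
  using assms
  by (cases x; cases y) (auto simp: grid_step_def grid_to_root_def grid_def dyck_step_def succJ_def sbar_def)

lemma dyck_path_of_grid_path:
  assumes e: "grid_path n e" and hd: "hd e = (i, i + 1)"
    and last: "last e = (j, j + 1) \<or> last e = (j, 2 * n + 1 - j)"
  shows "dyck_path n (map (grid_to_root n) e)"
  unfolding dyck_path_iff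
proof (intro conjI)
  have ne: "e \<noteq> []" and sub: "set e \<subseteq> grid n" using e by (auto simp: grid_path_def)
  then show "map (grid_to_root n) e \<noteq> []" "set (map (grid_to_root n) e) \<subseteq> posroots n"
    using grid_to_root_in_posroots by auto
  show "fst (hd (map (grid_to_root n) e)) = snd (hd (map (grid_to_root n) e))"
    using ne sub hd hd_in_set[OF ne] by (auto simp: hd_map grid_to_root_def grid_def)
  have "last e \<in> grid n" using sub last_in_set[OF ne] by blast
  then show "snd (last (map (grid_to_root n) e)) = fst (last (map (grid_to_root n) e)) \<or>
      snd (last (map (grid_to_root n) e)) = sbar n (fst (last (map (grid_to_root n) e)))"
    using ne last by (auto simp: last_map grid_to_root_def grid_def sbar_def)
  have "successively grid_step e" using e by (simp add: grid_path_def)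
  then show "successively (dyck_step n) (map (grid_to_root n) e)"
    unfolding successively_map
    by (rule successively_mono) (use sub grid_step_dyck_step in blast)
qed

lemma dyck_path_through_to_long_root:
  assumes a: "a \<in> posroots n" and b: "b \<in> posroots n" and "a \<le> b"
  shows "\<exists>d. dyck_path n d \<and> a \<in> set d \<and> b \<in> set d \<and> dyck_bound n m d = (\<Sum>t = fst a..n. m t)"
proof -
  obtain i q j q' where ij: "a = (i, q)" "b = (j, q')" by fastforce
  let ?cs = "[(i, i + 1), (i, root_entry n q), (j, root_entry n q'), (j, 2 * n + 1 - j)]"
  have "set ?cs \<subseteq> grid n" "sorted_wrt (\<le>) ?cs"
    using a b \<open>a \<le> b\<close> root_entry_le_iff[of q n q']
    by (auto simp: ij posroots_iff grid_def root_entry_def split: if_splits)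
  then obtain e where e: "grid_path n e" "hd e = (i, i + 1)" "last e = (j, 2 * n + 1 - j)"
    "set ?cs \<subseteq> set e"
    using grid_path_through[of ?cs n] by auto
  have "last e \<in> grid n" using e(1) last_in_set by (auto simp: grid_path_def)
  then have "j = n \<or> j < n" using e(3) by (auto simp: grid_def)
  then have "dyck_bound n m (map (grid_to_root n) e) = (\<Sum>t = i..n. m t)"
    using e(1,2,3) by (auto simp: grid_path_def dyck_bound_def hd_map last_map grid_to_root_def)
  moreover have "grid_to_root n ` set ?cs \<subseteq> set (map (grid_to_root n) e)"
    using e(4) by auto
  then have "a \<in> set (map (grid_to_root n) e)" "b \<in> set (map (grid_to_root n) e)"
    using grid_to_root_root_entry a b by (auto simp: ij)
  ultimately show ?thesis
    using dyck_path_of_grid_path[OF e(1,2), of j] e(3) ij by auto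
qed

lemma dyck_path_through_to_simple_root:
  assumes a: "a \<in> posroots n" and "snd a \<le> n"
  shows "\<exists>d. dyck_path n d \<and> a \<in> set d \<and> dyck_bound n m d = (\<Sum>t = fst a..snd a. m t)"
proof -
  obtain i j where ij: "a = (i, j)" by fastforce
  let ?cs = "[(i, i + 1), (i, j + 1), (j, j + 1)]"
  have "set ?cs \<subseteq> grid n" "sorted_wrt (\<le>) ?cs"
    using a \<open>snd a \<le> n\<close> by (auto simp: ij posroots_iff grid_def root_entry_def)
  then obtain e where e: "grid_path n e" "hd e = (i, i + 1)" "last e = (j, j + 1)" "set ?cs \<subseteq> set e"
    using grid_path_through[of ?cs n] by auto
  have "dyck_bound n m (map (grid_to_root n) e) = (\<Sum>t = i..j. m t)"
    using e(1,2,3) \<open>snd a \<le> n\<close> ij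
    by (auto simp: grid_path_def dyck_bound_def hd_map last_map grid_to_root_def)
  moreover have "grid_to_root n (i, j + 1) \<in> set (map (grid_to_root n) e)"
    using e(4) by auto
  then have "a \<in> set (map (grid_to_root n) e)"
    using \<open>snd a \<le> n\<close> by (simp add: ij grid_to_root_def)
  ultimately show ?thesis
    using dyck_path_of_grid_path[OF e(1,2), of j] e(3) ij by auto
qed

lemma dyck_path_sorted: "dyck_path n d \<Longrightarrow> sorted_wrt (<) d"
proof -
  assume "dyck_path n d"
  then have "successively (<) d"
    unfolding dyck_path_iff by (blast intro: successively_mono dyck_step_less)
  then show ?thesis by (simp add: successively_conv_sorted_wrt)
qed

lemma fflv_S_iff:
  "p \<in> fflv_S n m \<longleftrightarrow> (\<forall>a. a \<notin> posroots n \<longrightarrow> p a = 0) \<and> (\<forall>a \<in> posroots n. 0 \<le> p a)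
     \<and> (\<forall>d. dyck_path n d \<longrightarrow> sum_list (map p d) \<le> int (dyck_bound n m d))"
proof -
  have "sum_list (map (\<lambda>a. real_of_int (p a)) d) = real_of_int (sum_list (map p d))" for d
    by (induction d) auto
  then have "sum_list (map (\<lambda>a. real_of_int (p a)) d) \<le> real b \<longleftrightarrow> sum_list (map p d) \<le> int b" for d b
    by (metis of_int_le_iff of_int_of_nat_eq)
  then show ?thesis
    unfolding fflv_S_def fflv_polytope_def by simp
qed

lemma fflv_S_sum_le:
  assumes "p \<in> fflv_S n m" "dyck_path n d" "A \<subseteq> set d"
  shows "(\<Sum>a\<in>A. p a) \<le> int (dyck_bound n m d)"
proof -
  have nonneg: "0 \<le> p a" if "a \<in> set d" for a
    using assms(1,2) that unfolding fflv_S_iff dyck_path_def by blast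
  have "(\<Sum>a\<in>A. p a) \<le> (\<Sum>a\<in>set d. p a)"
    using assms(3) nonneg by (intro sum_mono2) auto
  also have "\<dots> = sum_list (map p d)"
    using sorted_wrt_less_distinct[OF dyck_path_sorted[OF assms(2)]]
    by (simp add: sum_list_distinct_conv_sum_set)
  also have "\<dots> \<le> int (dyck_bound n m d)"
    using assms(1,2) unfolding fflv_S_iff by blast
  finally show ?thesis .
qed

lemma sum_omega: "(\<Sum>t = i..j. omega k t) = (if i \<le> k \<and> k \<le> j then 1 else 0)"
  unfolding omega_def by (simp add: sum.delta')

definition omega_roots :: "nat \<Rightarrow> nat \<Rightarrow> (nat \<times> nat) set" where
  "omega_roots n k = {a \<in> posroots n. fst a \<le> k \<and> k \<le> snd a}"

definition omega_antichain :: "nat \<Rightarrow> nat \<Rightarrow> (nat \<times> nat \<Rightarrow> int) \<Rightarrow> bool" where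
  "omega_antichain n k p \<longleftrightarrow> (\<forall>a. p a = 0 \<or> p a = 1) \<and> (\<forall>a. p a = 1 \<longrightarrow> a \<in> omega_roots n k)
     \<and> (\<forall>a b. p a = 1 \<longrightarrow> p b = 1 \<longrightarrow> a \<le> b \<longrightarrow> a = b)"

lemma omega_antichainD:
  assumes "omega_antichain n k p"
  shows "p a = 0 \<or> p a = 1" "p a = 1 \<Longrightarrow> a \<in> omega_roots n k"
    "p a = 1 \<Longrightarrow> p b = 1 \<Longrightarrow> a \<le> b \<Longrightarrow> a = b"
  using assms unfolding omega_antichain_def by blast+

lemma omega_antichain_if_fflv_S:
  assumes "k \<le> n" and S: "p \<in> fflv_S n (omega k)"
  shows "omega_antichain n k p"
proof -
  have le_row: "p a \<le> (if fst a \<le> k then 1 else 0)" if a: "a \<in> posroots n" for a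
  proof -
    obtain d where "dyck_path n d" "a \<in> set d" "dyck_bound n (omega k) d = (\<Sum>t = fst a..n. omega k t)"
      using dyck_path_through_to_long_root[OF a a order_refl] by blast
    then show ?thesis
      using fflv_S_sum_le[OF S, of d "{a}"] \<open>k \<le> n\<close> by (auto simp: sum_omega split: if_splits)
  qed
  have zero_below: "p a \<le> 0" if a: "a \<in> posroots n" "snd a < k" for a
  proof -
    obtain d where "dyck_path n d" "a \<in> set d" "dyck_bound n (omega k) d = (\<Sum>t = fst a..snd a. omega k t)"
      using dyck_path_through_to_simple_root[OF a(1)] a(2) \<open>k \<le> n\<close> by fastforce
    then show ?thesis
      using fflv_S_sum_le[OF S, of d "{a}"] a(2) by (simp add: sum_omega)
  qed
  have antichain: "a = b"
    if ab: "a \<in> posroots n" "b \<in> posroots n" "a \<le> b" and one: "p a = 1" "p b = 1" for a b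
  proof (rule ccontr)
    assume "a \<noteq> b"
    obtain d where "dyck_path n d" "a \<in> set d" "b \<in> set d"
      "dyck_bound n (omega k) d = (\<Sum>t = fst a..n. omega k t)"
      using dyck_path_through_to_long_root[OF ab] by blast
    then show False
      using fflv_S_sum_le[OF S, of d "{a, b}"] \<open>a \<noteq> b\<close> one by (simp add: sum_omega split: if_splits)
  qed
  have outside: "p a = 0" if "a \<notin> posroots n" for a
    using S that unfolding fflv_S_iff by blast
  have nonneg: "0 \<le> p a" if "a \<in> posroots n" for a
    using S that unfolding fflv_S_iff by blast
  have zero_or_one: "p a = 0 \<or> p a = 1 \<and> a \<in> omega_roots n k" for a
  proof (cases "a \<in> posroots n \<and> p a \<noteq> 0")
    case True
    then have "1 \<le> p a" using nonneg[of a] by linarith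
    then have "fst a \<le> k" "p a = 1" "k \<le> snd a"
      using True le_row[of a] zero_below[of a] by (auto simp: not_less[symmetric] split: if_splits)
    then show ?thesis using True by (simp add: omega_roots_def)
  qed (use outside in blast)
  show ?thesis
    unfolding omega_antichain_def
  proof (intro conjI allI impI)
    show "p a = 0 \<or> p a = 1" for a using zero_or_one[of a] by auto
    show "p a = 1 \<Longrightarrow> a \<in> omega_roots n k" for a using zero_or_one[of a] by auto
    show "a = b" if "p a = 1" "p b = 1" "a \<le> b" for a b
      using that antichain zero_or_one[of a] zero_or_one[of b] by (auto simp: omega_roots_def)
  qed
qed

lemma fflv_S_if_omega_antichain:
  assumes "k \<le> n" and p: "omega_antichain n k p"
  shows "p \<in> fflv_S n (omega k)"
  unfolding fflv_S_iff
proof (intro conjI allI ballI impI)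
  note zero_or_one = omega_antichainD(1)[OF p] and one_in = omega_antichainD(2)[OF p]
    and antichain = omega_antichainD(3)[OF p]
  show "p a = 0" if "a \<notin> posroots n" for a
    using zero_or_one[of a] one_in[of a] that by (auto simp: omega_roots_def)
  show "0 \<le> p a" for a
    using zero_or_one[of a] by auto
  fix d assume d: "dyck_path n d"
  have sorted: "sorted_wrt (<) d" by (rule dyck_path_sorted[OF d])
  have sum_eq: "sum_list (map p d) = (\<Sum>a\<in>set d. p a)"
    using sorted_wrt_less_distinct[OF sorted] by (simp add: sum_list_distinct_conv_sum_set)
  show "sum_list (map p d) \<le> int (dyck_bound n (omega k) d)"
  proof (cases "\<exists>a \<in> set d. p a = 1")
    case False
    then have "\<forall>a \<in> set d. p a = 0" using zero_or_one by blast
    then show ?thesis using sum_eq by simp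
  next
    case True
    then obtain a where a: "a \<in> set d" "p a = 1" by blast
    have "p b = 0" if "b \<in> set d - {a}" for b
    proof -
      have "a \<le> b \<or> b \<le> a" using sorted_wrt_less_comparable[OF sorted a(1)] that by blast
      then have "p b = 1 \<Longrightarrow> a = b" using antichain a(2) by metis
      then show ?thesis using that zero_or_one[of b] by blast
    qed
    then have "(\<Sum>a\<in>set d. p a) = 1"
      using sum.remove[of "set d" a p] a by simp
    moreover have "dyck_bound n (omega k) d = 1"
    proof -
      have "hd d \<le> a" "a \<le> last d" using sorted_wrt_less_hd_last[OF sorted a(1)] by auto
      moreover have "fst a \<le> k" "k \<le> snd a" using one_in[OF a(2)] by (auto simp: omega_roots_def)
      ultimately show ?thesis
        using \<open>k \<le> n\<close> by (auto simp: dyck_bound_def Let_def sum_omega less_eq_prod_def)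
    qed
    ultimately show ?thesis using sum_eq by simp
  qed
qed

lemma fflv_S_omega_iff: "k \<le> n \<Longrightarrow> p \<in> fflv_S n (omega k) \<longleftrightarrow> omega_antichain n k p"
  using omega_antichain_if_fflv_S fflv_S_if_omega_antichain by blast

definition row_entry :: "nat \<Rightarrow> (nat \<times> nat \<Rightarrow> int) \<Rightarrow> nat \<Rightarrow> nat" where
  "row_entry n p i = (if \<exists>q. p (i, q) = 1 then root_entry n (SOME q. p (i, q) = 1) else i)"

definition column_of :: "nat \<Rightarrow> nat \<Rightarrow> (nat \<times> nat \<Rightarrow> int) \<Rightarrow> nat list" where
  "column_of n k p = map (row_entry n p) [1..<k + 1]"

definition pattern_of :: "nat \<Rightarrow> nat \<Rightarrow> nat list \<Rightarrow> nat \<times> nat \<Rightarrow> int" where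
  "pattern_of n k T a =
     (if a \<in> posroots n \<and> fst a \<in> {1..k} \<and> T ! (fst a - 1) \<noteq> fst a
         \<and> root_entry n (snd a) = T ! (fst a - 1) then 1 else 0)"

lemma length_column_of: "length (column_of n k p) = k"
  by (simp add: column_of_def)

lemma nth_column_of: "i \<in> {1..k} \<Longrightarrow> column_of n k p ! (i - 1) = row_entry n p i"
  by (auto simp: column_of_def simp del: upt_Suc)

lemma set_column_of: "set (column_of n k p) = row_entry n p ` {1..k}"
  unfolding column_of_def set_map set_upt by (simp add: atLeastLessThanSuc_atLeastAtMost)

lemma omega_roots_bounds:
  assumes "(i, q) \<in> omega_roots n k" "k \<le> n"
  shows "i \<in> {1..k}" "k < root_entry n q" "i + root_entry n q \<le> 2 * n + 1" "q \<noteq> n + 1"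
  using assms root_entry_gt[of k n q] by (auto simp: omega_roots_def posroots_iff)

lemma omega_antichain_row_unique:
  assumes "omega_antichain n k p" "p (i, q) = 1" "p (i, q') = 1"
  shows "q = q'"
  using omega_antichainD(3)[OF assms(1,2,3)] omega_antichainD(3)[OF assms(1,3,2)]
  by (cases "q \<le> q'") auto

lemma row_entry_cases:
  assumes p: "omega_antichain n k p"
  obtains "\<forall>q. p (i, q) \<noteq> 1" "row_entry n p i = i"
  | q where "p (i, q) = 1" "(i, q) \<in> omega_roots n k" "row_entry n p i = root_entry n q"
proof (cases "\<exists>q. p (i, q) = 1")
  case True
  then obtain q where q: "p (i, q) = 1" by blast
  then have "row_entry n p i = root_entry n q"
    unfolding row_entry_def using someI[of "\<lambda>q. p (i, q) = 1", OF q] omega_antichain_row_unique[OF p q]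
    by auto
  moreover have "(i, q) \<in> omega_roots n k" using omega_antichainD(2)[OF p q] .
  ultimately show ?thesis using q that(2) by blast
qed (use that(1) in \<open>auto simp: row_entry_def\<close>)

lemma row_entry_eq: "omega_antichain n k p \<Longrightarrow> p (i, q) = 1 \<Longrightarrow> row_entry n p i = root_entry n q"
  by (cases rule: row_entry_cases[of n k p i]) (auto dest: omega_antichain_row_unique)

lemma pbw_columnD:
  assumes "pbw_column n k T"
  shows "length T = k"
    "i \<in> {1..k} \<Longrightarrow> T ! (i - 1) \<in> {1..2 * n}"
    "i \<in> {1..k} \<Longrightarrow> T ! (i - 1) \<le> k \<Longrightarrow> T ! (i - 1) = i"
    "i \<in> {1..k} \<Longrightarrow> j \<in> {1..k} \<Longrightarrow> i < j \<Longrightarrow> T ! (i - 1) \<noteq> i \<Longrightarrow> T ! (j - 1) < T ! (i - 1)"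
    "i \<in> {1..k} \<Longrightarrow> j \<in> {1..k} \<Longrightarrow> i < k \<Longrightarrow> T ! (i - 1) = i \<Longrightarrow> T ! (j - 1) = sbar n i
      \<Longrightarrow> j < i"
  using assms unfolding pbw_column_def by blast+

lemma pbw_column_column_of:
  assumes "k \<le> n" and p: "omega_antichain n k p"
  shows "pbw_column n k (column_of n k p)"
proof -
  note bounds = omega_roots_bounds[OF _ \<open>k \<le> n\<close>]
  have range: "row_entry n p i \<in> {1..2 * n}" if "i \<in> {1..k}" for i
    using that \<open>k \<le> n\<close> by (cases rule: row_entry_cases[OF p, of i]) (auto dest: bounds)
  have fixed: "row_entry n p i = i" if "row_entry n p i \<le> k" for i
    using that by (cases rule: row_entry_cases[OF p, of i]) (auto dest: bounds)
  have decreasing: "row_entry n p j < row_entry n p i"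
    if "j \<in> {1..k}" "i < j" "row_entry n p i \<noteq> i" for i j
  proof (cases rule: row_entry_cases[OF p, of i])
    case (2 q)
    note i = 2 bounds[OF 2(2)]
    show ?thesis
    proof (cases rule: row_entry_cases[OF p, of j])
      case (2 q')
      have "\<not> q \<le> q'" using omega_antichainD(3)[OF p i(1) 2(1)] \<open>i < j\<close> by auto
      then show ?thesis using 2 i root_entry_le_iff[of q n q'] bounds[OF 2(2)] by auto
    qed (use that i in auto)
  qed (use that in auto)
  have symplectic: "j < i"
    if "i \<in> {1..k}" "row_entry n p i = i" "j \<in> {1..k}" "row_entry n p j = sbar n i" for i j
  proof -
    have empty: "\<forall>q. p (i, q) \<noteq> 1"
    proof (cases rule: row_entry_cases[OF p, of i])
      case (2 q)
      then show ?thesis using bounds[OF 2(2)] that(1,2) by auto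
    qed
    show ?thesis
    proof (cases rule: row_entry_cases[OF p, of j])
      case 1
      then show ?thesis using that \<open>k \<le> n\<close> by (auto simp: sbar_def)
    next
      case (2 q)
      then have "j \<le> i" using bounds[OF 2(2)] that(4) by (auto simp: sbar_def)
      moreover have "j \<noteq> i" using empty 2(1) by auto
      ultimately show ?thesis by simp
    qed
  qed
  show ?thesis
    unfolding pbw_column_def
  proof (intro conjI ballI impI)
    fix i j assume i: "i \<in> {1..k}" and j: "j \<in> {1..k}"
    note T_i = nth_column_of[OF i, of n p] and T_j = nth_column_of[OF j, of n p]
    show "column_of n k p ! (i - 1) \<in> {1..2 * n}" using range[OF i] T_i by simp
    show "column_of n k p ! (i - 1) = i" if "column_of n k p ! (i - 1) \<le> k"
      using fixed that T_i by simp
    show "column_of n k p ! (j - 1) < column_of n k p ! (i - 1)"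
      if "i < j \<and> column_of n k p ! (i - 1) \<noteq> i"
      using decreasing[OF j] that T_i T_j by simp
    show "j < i" if "i < k \<and> column_of n k p ! (i - 1) = i \<and> column_of n k p ! (j - 1) = sbar n i"
      using symplectic[OF i _ j] that T_i T_j by simp
  qed (rule length_column_of)
qed

lemma pbw_column_entry_bound:
  assumes T: "pbw_column n k T" and i: "i \<in> {1..k}"
  shows "T ! (i - 1) + i \<le> 2 * n + 1"
  using i
proof (induction i rule: less_induct)
  case (less i)
  show ?case
  proof (rule ccontr)
    \<comment> \<open>Otherwise row i holds the letter bar j of an earlier row j, which
        rules out both possible entries of row j.\<close>
    assume "\<not> T ! (i - 1) + i \<le> 2 * n + 1"
    moreover have "T ! (i - 1) \<in> {1..2 * n}" using pbw_columnD(2)[OF T less.prems] .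
    ultimately obtain j where j: "j \<in> {1..k}" "j < i" "T ! (i - 1) = sbar n j"
      using less.prems by (intro that[of "2 * n + 1 - T ! (i - 1)"]) (auto simp: sbar_def)
    show False
    proof (cases "T ! (j - 1) = j")
      case True
      then show False using pbw_columnD(5)[OF T j(1) less.prems _ True j(3)] j less.prems by simp
    next
      case False
      then have "T ! (i - 1) < T ! (j - 1)" using pbw_columnD(4)[OF T j(1) less.prems j(2)] by simp
      then show False using less.IH[OF j(2,1)] j(3) by (simp add: sbar_def)
    qed
  qed
qed

lemma omega_antichain_pattern_of:
  assumes "k \<le> n" and T: "pbw_column n k T"
  shows "omega_antichain n k (pattern_of n k T)"
  unfolding omega_antichain_def
proof (intro conjI allI impI)
  fix a b
  show "pattern_of n k T a = 0 \<or> pattern_of n k T a = 1" by (simp add: pattern_of_def)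
  assume a: "pattern_of n k T a = 1"
  then have a_props: "a \<in> posroots n" "fst a \<in> {1..k}" "T ! (fst a - 1) \<noteq> fst a"
      "root_entry n (snd a) = T ! (fst a - 1)"
    by (auto simp: pattern_of_def split: if_splits)
  have "k < T ! (fst a - 1)" using pbw_columnD(3)[OF T a_props(2)] a_props(3) by force
  then show "a \<in> omega_roots n k"
    using a_props \<open>k \<le> n\<close> by (auto simp: omega_roots_def root_entry_def split: if_splits)
  assume b: "pattern_of n k T b = 1" and "a \<le> b"
  then have b_props: "b \<in> posroots n" "fst b \<in> {1..k}" "root_entry n (snd b) = T ! (fst b - 1)"
    by (auto simp: pattern_of_def split: if_splits)
  show "a = b"
  proof (cases "fst a = fst b")
    case True
    have "snd a \<noteq> n + 1" "snd b \<noteq> n + 1"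
      using a_props(1) b_props(1) by (metis posroots_iff prod.collapse)+
    then have "snd a = snd b"
      using True a_props(4) b_props(3) root_entry_eq_iff[of "snd a" n "snd b"] by simp
    then show ?thesis using True by (simp add: prod_eq_iff)
  next
    case False
    then have "T ! (fst b - 1) < T ! (fst a - 1)"
      using pbw_columnD(4)[OF T a_props(2) b_props(2)] a_props(3) \<open>a \<le> b\<close>
      by (simp add: less_eq_prod_def)
    then show ?thesis
      using root_entry_mono[of "snd a" "snd b" n] a_props(4) b_props(3) \<open>a \<le> b\<close>
      by (simp add: less_eq_prod_def)
  qed
qed

lemma column_of_pattern_of:
  assumes "k \<le> n" and T: "pbw_column n k T"
  shows "column_of n k (pattern_of n k T) = T"
proof (rule nth_equalityI)
  show "length (column_of n k (pattern_of n k T)) = length T"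
    using pbw_columnD(1)[OF T] by (simp add: length_column_of)
  fix m assume m: "m < length (column_of n k (pattern_of n k T))"
  define i where "i = m + 1"
  have i: "i \<in> {1..k}" using m by (simp add: i_def length_column_of)
  have "row_entry n (pattern_of n k T) i = T ! (i - 1)"
  proof (cases "T ! (i - 1) = i")
    case True
    then have "\<forall>q. pattern_of n k T (i, q) \<noteq> 1" by (simp add: pattern_of_def)
    then show ?thesis using True by (simp add: row_entry_def)
  next
    case False
    \<comment> \<open>The entry is a letter greater than k that fits into row i, so it comes from a root.\<close>
    have "k < T ! (i - 1)" using pbw_columnD(3)[OF T i] False by force
    then have "(i, T ! (i - 1)) \<in> grid n"
      using pbw_column_entry_bound[OF T i] i by (auto simp: grid_def)
    then obtain q where q: "(i, q) \<in> posroots n" "root_entry n q = T ! (i - 1)"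
      using grid_to_root_in_posroots root_entry_grid_to_root by (metis fst_conv grid_to_root_def snd_conv)
    then have "pattern_of n k T (i, q) = 1" using i False by (simp add: pattern_of_def)
    then show ?thesis
      using row_entry_eq[OF omega_antichain_pattern_of[OF assms]] q(2) by simp
  qed
  then show "column_of n k (pattern_of n k T) ! m = T ! m"
    using nth_column_of[OF i] by (simp add: i_def)
qed

lemma pattern_of_column_of:
  assumes "k \<le> n" and p: "omega_antichain n k p"
  shows "pattern_of n k (column_of n k p) = p"
proof
  fix a :: "nat \<times> nat"
  obtain i q where a: "a = (i, q)" by fastforce
  show "pattern_of n k (column_of n k p) a = p a"
  proof (cases "p a = 1")
    case True
    note bounds = omega_roots_bounds[OF omega_antichainD(2)[OF p True[unfolded a]] \<open>k \<le> n\<close>]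
    have "row_entry n p i = root_entry n q"
      by (cases rule: row_entry_cases[OF p, of i])
        (use True a omega_antichain_row_unique[OF p] in auto)
    then show ?thesis
      using True bounds omega_antichainD(2)[OF p True] nth_column_of[OF bounds(1), of n p]
      by (auto simp: pattern_of_def omega_roots_def a)
  next
    case False
    then have "p a = 0" using omega_antichainD(1)[OF p] by blast
    moreover have "pattern_of n k (column_of n k p) a \<noteq> 1"
    proof
      assume "pattern_of n k (column_of n k p) a = 1"
      then have h: "a \<in> posroots n" "i \<in> {1..k}" "row_entry n p i \<noteq> i" "root_entry n q = row_entry n p i"
        using nth_column_of[of i k n p] by (auto simp: pattern_of_def a split: if_splits)
      then obtain q' where q': "p (i, q') = 1" "(i, q') \<in> omega_roots n k" "row_entry n p i = root_entry n q'"
        by (cases rule: row_entry_cases[OF p, of i]) auto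
      have "q = q'"
        using h(1,4) q'(3) omega_roots_bounds(4)[OF q'(2) \<open>k \<le> n\<close>] root_entry_eq_iff
        by (simp add: a posroots_iff)
      then show False using q'(1) False a by simp
    qed
    ultimately show ?thesis by (auto simp: pattern_of_def split: if_splits)
  qed
qed

definition letter_weight :: "nat \<Rightarrow> nat \<Rightarrow> nat \<Rightarrow> int" where
  "letter_weight n x l =
     (if 1 \<le> l \<and> l \<le> n then (if x = l then 1 else 0) - (if x = sbar n l then 1 else 0) else 0)"

lemma tableau_weight_eq_sum: "tableau_weight n T l = (\<Sum>x\<in>set T. letter_weight n x l)"
  by (cases "1 \<le> l \<and> l \<le> n") (auto simp: tableau_weight_def letter_weight_def sum_subtractf sum.delta)

lemma hw_omega_eq_sum:
  assumes "k \<le> n"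
  shows "hw n (omega k) l = (\<Sum>x\<in>{1..k}. letter_weight n x l)"
proof -
  have "(\<Sum>t = l..n. int (omega k t)) = (if l \<le> k then 1 else 0)"
    using sum_omega[where i = l and j = n] assms by (simp flip: of_nat_sum)
  then show ?thesis
    using assms by (auto simp: hw_def letter_weight_def sum_subtractf sbar_def)
qed

lemma letter_weight_unbarred: "1 \<le> j \<Longrightarrow> j \<le> n \<Longrightarrow> letter_weight n j l = eps j l"
  by (auto simp: letter_weight_def eps_def sbar_def)

lemma letter_weight_barred: "1 \<le> j \<Longrightarrow> j \<le> n \<Longrightarrow> letter_weight n (sbar n j) l = - eps j l"
  by (auto simp: letter_weight_def eps_def sbar_def)

lemma rootvec_eq_letter_weights:
  assumes "(i, q) \<in> posroots n"
  shows "rootvec n (i, q) l = letter_weight n i l - letter_weight n (root_entry n q) l"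
proof -
  have q: "q \<noteq> n + 1" "1 \<le> i" "i \<le> n" "q \<le> 2 * n"
    using assms by (auto simp: posroots_iff root_entry_def split: if_splits)
  note i = letter_weight_unbarred[OF q(2,3)]
  consider "q < n" | "q = n" | "n + 1 < q" using q(1) by linarith
  then show ?thesis
  proof cases
    case 1
    then show ?thesis
      using i letter_weight_unbarred[of "q + 1" n l] by (simp add: rootvec_def root_entry_def)
  next
    case 2
    then show ?thesis
      using i letter_weight_barred[of n n l] q(2,3) by (simp add: rootvec_def root_entry_def sbar_def)
  next
    case 3
    then have "q = sbar n (sbar n q)" "1 \<le> sbar n q" "sbar n q \<le> n"
      using q(4) by (auto simp: sbar_def)
    then show ?thesis
      using i 3 letter_weight_barred[of "sbar n q" n l] by (simp add: rootvec_def root_entry_def)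
  qed
qed

lemma set_column_of_omega_antichain:
  assumes "k \<le> n" and p: "omega_antichain n k p"
  shows "set (column_of n k p)
    = ({1..k} - fst ` {a. p a = 1}) \<union> (\<lambda>a. root_entry n (snd a)) ` {a. p a = 1}"
    (is "_ = ?unused \<union> ?entries")
proof -
  have unused_iff: "i \<notin> fst ` {a. p a = 1} \<longleftrightarrow> (\<forall>q. p (i, q) \<noteq> 1)" for i
    by (auto simp: image_iff)
  have row_entry_in: "row_entry n p i \<in> ?unused \<union> ?entries" if i: "i \<in> {1..k}" for i
  proof (cases rule: row_entry_cases[OF p, of i])
    case 1
    then show ?thesis using i unused_iff by simp
  next
    case (2 q)
    then have "row_entry n p i = root_entry n (snd (i, q))" by simp
    then show ?thesis using 2(1) by blast
  qed
  have unused_sub: "?unused \<subseteq> row_entry n p ` {1..k}"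
  proof
    fix i assume i: "i \<in> ?unused"
    then have "row_entry n p i = i" using unused_iff by (simp add: row_entry_def)
    then show "i \<in> row_entry n p ` {1..k}" using i by force
  qed
  have entries_sub: "?entries \<subseteq> row_entry n p ` {1..k}"
  proof
    fix x assume "x \<in> ?entries"
    then obtain i q where iq: "p (i, q) = 1" "x = root_entry n q" by force
    from omega_roots_bounds(1)[OF omega_antichainD(2)[OF p iq(1)] \<open>k \<le> n\<close>]
    have "i \<in> {1..k}" .
    then show "x \<in> row_entry n p ` {1..k}" using row_entry_eq[OF p iq(1)] iq(2) by force
  qed
  show ?thesis
    unfolding set_column_of
    by (rule equalityI[OF image_subsetI[OF row_entry_in] Un_least[OF unused_sub entries_sub]])
qed

lemma tableau_weight_column_of:
  assumes "k \<le> n" and p: "omega_antichain n k p"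
  shows "tableau_weight n (column_of n k p) = fflv_weight n (omega k) p"
proof
  fix l
  define A where "A = {a. p a = 1}"
  let ?w = "\<lambda>x. letter_weight n x l" and ?e = "\<lambda>a. root_entry n (snd a)"
  note bounds = omega_roots_bounds[OF omega_antichainD(2)[OF p] \<open>k \<le> n\<close>]
  have A_roots: "A \<subseteq> posroots n" using omega_antichainD(2)[OF p] by (auto simp: A_def omega_roots_def)
  then have "finite A" using finite_posroots finite_subset by blast
  have inj_fst: "inj_on fst A"
    by (rule inj_onI) (use omega_antichain_row_unique[OF p] in \<open>auto simp: A_def\<close>)
  have inj_e: "inj_on ?e A"
  proof (rule inj_onI)
    fix a b assume ab: "a \<in> A" "b \<in> A" "?e a = ?e b"
    then have "snd a = snd b"
      using bounds(4)[of "fst a" "snd a"] bounds(4)[of "fst b" "snd b"] root_entry_eq_iff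
      by (auto simp: A_def)
    then have "a \<le> b \<or> b \<le> a" by (auto simp: less_eq_prod_def)
    then show "a = b"
      using ab(1,2) omega_antichainD(3)[OF p, of a b] omega_antichainD(3)[OF p, of b a]
      by (auto simp: A_def)
  qed
  have rows: "fst ` A \<subseteq> {1..k}" using bounds(1) by (force simp: A_def)
  have entries: "?e ` A \<inter> {1..k} = {}" using bounds(2) by (force simp: A_def)
  have "(\<Sum>a\<in>posroots n. p a * rootvec n a l) = (\<Sum>a\<in>A. p a * rootvec n a l)"
    using A_roots omega_antichainD(1)[OF p]
    by (intro sum.mono_neutral_right finite_posroots) (auto simp: A_def)
  also have "\<dots> = (\<Sum>a\<in>A. ?w (fst a) - ?w (?e a))"
    using A_roots by (intro sum.cong) (auto simp: A_def rootvec_eq_letter_weights)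
  finally have "fflv_weight n (omega k) p l
      = (\<Sum>x\<in>{1..k}. ?w x) - (\<Sum>a\<in>A. ?w (fst a) - ?w (?e a))"
    by (simp add: fflv_weight_def hw_omega_eq_sum[OF \<open>k \<le> n\<close>])
  also have "\<dots> = (\<Sum>x\<in>{1..k}. ?w x) - (\<Sum>x\<in>fst ` A. ?w x) + (\<Sum>x\<in>?e ` A. ?w x)"
    by (simp add: sum_subtractf sum.reindex[OF inj_fst] sum.reindex[OF inj_e])
  also have "\<dots> = (\<Sum>x\<in>{1..k} - fst ` A. ?w x) + (\<Sum>x\<in>?e ` A. ?w x)"
    using sum_diff[OF finite_atLeastAtMost rows, of ?w] by simp
  also have "\<dots> = (\<Sum>x\<in>({1..k} - fst ` A) \<union> ?e ` A. ?w x)"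
    using entries \<open>finite A\<close> by (intro sum.union_disjoint[symmetric]) auto
  also have "\<dots> = (\<Sum>x\<in>set (column_of n k p). ?w x)"
    by (simp add: set_column_of_omega_antichain[OF assms] A_def)
  finally show "tableau_weight n (column_of n k p) l = fflv_weight n (omega k) p l"
    by (simp add: tableau_weight_eq_sum)
qed

theorem proposition3p8:
  fixes n k :: nat
  assumes "1 \<le> n" and "1 \<le> k" and "k \<le> n"
  shows "\<exists>f. bij_betw f (fflv_S n (omega k)) (pbw_columns n k)
           \<and> (\<forall>p \<in> fflv_S n (omega k). tableau_weight n (f p) = fflv_weight n (omega k) p)"
proof (intro exI conjI ballI)
  note S_iff = fflv_S_omega_iff[OF \<open>k \<le> n\<close>]
  show "bij_betw (column_of n k) (fflv_S n (omega k)) (pbw_columns n k)"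
  proof (rule bij_betw_byWitness[where f' = "pattern_of n k"])
    show "\<forall>p \<in> fflv_S n (omega k). pattern_of n k (column_of n k p) = p"
      using pattern_of_column_of[OF \<open>k \<le> n\<close>] S_iff by blast
    show "\<forall>T \<in> pbw_columns n k. column_of n k (pattern_of n k T) = T"
      using column_of_pattern_of[OF \<open>k \<le> n\<close>] by (simp add: pbw_columns_def)
    show "column_of n k ` fflv_S n (omega k) \<subseteq> pbw_columns n k"
      using pbw_column_column_of[OF \<open>k \<le> n\<close>] S_iff by (auto simp: pbw_columns_def)
    show "pattern_of n k ` pbw_columns n k \<subseteq> fflv_S n (omega k)"
      using omega_antichain_pattern_of[OF \<open>k \<le> n\<close>] S_iff by (auto simp: pbw_columns_def)
  qed
  show "tableau_weight n (column_of n k p) = fflv_weight n (omega k) p" if "p \<in> fflv_S n (omega k)" for p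
    using tableau_weight_column_of[OF \<open>k \<le> n\<close>] S_iff that by blast
qed

end
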